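(* (Fidelity susceptibility integral.) Let $x_0,\dots,x_q$ be complex numbers (repetitions allowed), $q\ge1$, $0\le j\le q-1$, and $\beta>0$. Then $$\int_0^{\beta/2}\tau\,e^{-\tau[x_{j+1},\ldots,x_q]}\,e^{-(\beta-\tau)[x_0,\ldots,x_j]}\,\mathrm{d}\tau=\sum_{r=0}^{j}e^{-\frac{\beta}{2}[x_0,\ldots,x_r]}\sum_{m=j+1}^{q}e^{-\frac{\beta}{2}[x_r,\ldots,x_q,x_m]}.$$
   Context: For $t\in\mathbb{R}$ and numbers $y_0,\dots,y_p$ (repetitions allowed), $e^{t[y_0,\ldots,y_p]}$ denotes the divided difference of $f(x)=e^{tx}$, $f[y_0,\ldots,y_p]=\frac{1}{2\pi i}\oint_\Gamma\frac{f(x)}{\prod_{i=0}^p(x-y_i)}\,\mathrm{d}x$, $\Gamma$ a positively oriented contour enclosing all $y_i$. The multiset $[x_r,\ldots,x_q,x_m]$ contains $x_m$ twice. *)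

theory Defs
  imports "HOL-Complex_Analysis.Complex_Analysis"
begin

text \<open>Divided difference of f(x) = exp(t x) at the nodes ys (repetitions allowed),
  defined by the contour integral (1/(2 pi i)) of f(x) / prod (x - y_i) over a positively
  oriented circle enclosing all nodes (radius 1 + sum of the moduli of the nodes).\<close>
definition exp_divdiff :: "real \<Rightarrow> complex list \<Rightarrow> complex" where
  "exp_divdiff t ys =
     contour_integral (circlepath 0 (1 + (\<Sum>y\<leftarrow>ys. norm y)))
       (\<lambda>z. exp (complex_of_real t * z) / (\<Prod>y\<leftarrow>ys. (z - y))) / (2 * of_real pi * \<i>)"

end

theory Submission
  imports Defs
begin

(* The divided difference e^{t[y_0,...,y_p]} is the sum of the residues of
   e^{tz} / prod_i (z - y_i), so the defining contour integral may be taken over any circle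
   around the nodes.  Differentiating under the integral gives
   d/dt e^{t[a,Y]} = a e^{t[a,Y]} + e^{t[Y]}, and letting the circle grow shows that
   e^{0[Y]} vanishes as soon as Y has two nodes.  From these two facts, three identities follow
   by exhibiting a function with vanishing (or telescoping) derivative: the Leibniz rule
   e^{(s+t)[a_0..a_p]} = sum_r e^{s[a_0..a_r]} e^{t[a_r..a_p]}, the rule
   sum_m e^{t[b,b_m]} = t e^{t[b]}, and
   int_0^T e^{-tau[c]} e^{(tau-T)[d]} dtau = - e^{-T[d,c]}.  Splitting e^{-(beta-tau)[x_0..x_j]}
   at -beta/2 with the Leibniz rule and writing tau e^{-tau[x_{j+1}..x_q]} as
   - sum_m e^{-tau[x_{j+1}..x_q,x_m]} turns the integral into a double sum of integrals of the
   last kind. *)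

lemma set_subset_cball_sum_list_norm: "set ys \<subseteq> cball 0 (\<Sum>y\<leftarrow>ys. norm y)"
  by (auto intro!: member_le_sum_list)

lemma contour_integral_circlepath_eq_sum_residues:
  assumes "f holomorphic_on - pts" "finite pts" "pts \<subseteq> ball 0 R"
  shows "contour_integral (circlepath 0 R) f = 2 * pi * \<i> * (\<Sum>p\<in>pts. residue f p)"
proof -
  have "contour_integral (circlepath 0 R) f
          = 2 * pi * \<i> * (\<Sum>p\<in>pts. winding_number (circlepath 0 R) p * residue f p)"
    using assms by (intro Residue_theorem[of UNIV]) (auto simp: Compl_eq_Diff_UNIV)
  also have "(\<Sum>p\<in>pts. winding_number (circlepath 0 R) p * residue f p) = (\<Sum>p\<in>pts. residue f p)"
    using assms(3) by (intro sum.cong) (auto simp: winding_number_circlepath)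
  finally show ?thesis .
qed

lemma has_vector_derivative_circlepath_integral_exp:
  assumes g: "continuous_on (sphere 0 R) g" and "0 < R"
  shows "((\<lambda>t. contour_integral (circlepath 0 R) (\<lambda>z. exp (complex_of_real t * z) * g z))
           has_vector_derivative
           contour_integral (circlepath 0 R) (\<lambda>z. z * exp (complex_of_real t * z) * g z)) (at t)"
proof -
  define c where "c = circlepath 0 R"
  define c' where "c' = (\<lambda>s::real. 2 * pi * \<i> * R * exp (2 * of_real pi * \<i> * s))"
  have c: "continuous_on UNIV c" and c': "continuous_on UNIV c'"
    unfolding c_def c'_def circlepath by (intro continuous_intros)+
  have "c s \<in> sphere 0 R" for s
    unfolding c_def circlepath using \<open>0 < R\<close> by (simp add: norm_mult)
  then have gc: "continuous_on UNIV (\<lambda>s. g (c s))"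
    by (intro continuous_on_compose2[OF g c]) auto
  have "((\<lambda>t. integral (cbox 0 1) (\<lambda>s. exp (of_real t * c s) * g (c s) * c' s)) has_vector_derivative
         integral (cbox 0 1) (\<lambda>s. c s * exp (of_real t * c s) * g (c s) * c' s)) (at t within UNIV)"
  proof (rule leibniz_rule_vector_derivative)
    fix t s :: real
    have "((\<lambda>w. exp (w * c s)) has_field_derivative c s * exp (of_real t * c s)) (at (of_real t))"
      by (auto intro!: derivative_eq_intros)
    from has_vector_derivative_real_field[OF this, of UNIV]
    show "((\<lambda>t. exp (of_real t * c s) * g (c s) * c' s) has_vector_derivative
            c s * exp (of_real t * c s) * g (c s) * c' s) (at t within UNIV)"
      by (intro has_vector_derivative_mult_left) simp
  next
    fix t :: real
    show "(\<lambda>s. exp (of_real t * c s) * g (c s) * c' s) integrable_on cbox 0 1"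
      by (intro integrable_continuous continuous_intros continuous_on_subset[OF gc]
          continuous_on_subset[OF c] continuous_on_subset[OF c']) auto
  next
    show "continuous_on (UNIV \<times> cbox 0 1) (\<lambda>(t, s). c s * exp (of_real t * c s) * g (c s) * c' s)"
      unfolding case_prod_beta
      by (intro continuous_intros continuous_on_compose2[OF gc continuous_on_snd]
          continuous_on_compose2[OF c continuous_on_snd] continuous_on_compose2[OF c' continuous_on_snd])
        auto
  qed auto
  then show ?thesis
    by (simp add: contour_integral_integral vector_derivative_circlepath c_def c'_def mult.assoc)
qed

lemma linear_ode_solution_eq_0:
  fixes h :: "real \<Rightarrow> complex"
  assumes "\<And>x. (h has_vector_derivative a * h x) (at x)" "h 0 = 0"
  shows "h x = 0"
proof -
  define k where "k = (\<lambda>x. exp (- (of_real x * a)) * h x)"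
  have "(k has_vector_derivative 0) (at x)" for x
  proof -
    have "((\<lambda>w. exp (- (w * a))) has_field_derivative - a * exp (- (of_real x * a))) (at (of_real x))"
      by (auto intro!: derivative_eq_intros)
    from has_vector_derivative_mult[OF has_vector_derivative_real_field[OF this] assms(1)]
    show ?thesis
      by (simp add: k_def algebra_simps)
  qed
  then obtain C where "\<And>x. k x = C"
    using has_vector_derivative_zero_constant[of UNIV k] by auto
  then have "k x = k 0"
    by simp
  with assms(2) show ?thesis
    by (simp add: k_def)
qed

lemma has_vector_derivative_sum_list:
  "(\<And>y. y \<in> set ys \<Longrightarrow> (f y has_vector_derivative f' y) F)
     \<Longrightarrow> ((\<lambda>x. \<Sum>y\<leftarrow>ys. f y x) has_vector_derivative (\<Sum>y\<leftarrow>ys. f' y)) F"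
  by (induction ys) (auto intro!: has_vector_derivative_add)

lemma has_integral_sum_list:
  "(\<And>y. y \<in> set ys \<Longrightarrow> (f y has_integral I y) S)
     \<Longrightarrow> ((\<lambda>x. \<Sum>y\<leftarrow>ys. f y x) has_integral (\<Sum>y\<leftarrow>ys. I y)) S"
  by (induction ys) (auto intro!: has_integral_add)

definition node_poly :: "complex list \<Rightarrow> complex \<Rightarrow> complex" where
  "node_poly ys z = (\<Prod>y\<leftarrow>ys. z - y)"

lemma node_poly_Nil [simp]: "node_poly [] z = 1"
  by (simp add: node_poly_def)

lemma node_poly_Cons [simp]: "node_poly (y # ys) z = (z - y) * node_poly ys z"
  by (simp add: node_poly_def)

lemma node_poly_perm: "mset xs = mset ys \<Longrightarrow> node_poly xs z = node_poly ys z"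
  unfolding node_poly_def by (metis mset_map prod_mset_prod_list)

lemma node_poly_eq_0_iff: "node_poly ys z = 0 \<longleftrightarrow> z \<in> set ys"
  by (induction ys) auto

lemma holomorphic_on_node_poly [holomorphic_intros]: "node_poly ys holomorphic_on S"
  by (induction ys) (auto intro!: holomorphic_intros simp: node_poly_def)

lemma norm_node_poly_ge:
  assumes "0 \<le> d" "\<And>y. y \<in> set ys \<Longrightarrow> d \<le> norm (z - y)"
  shows "d ^ length ys \<le> norm (node_poly ys z)"
  using assms by (induction ys) (auto simp: norm_mult intro!: mult_mono)

lemma exp_divdiff_integrand_holomorphic:
  "(\<lambda>z. exp (complex_of_real t * z) / node_poly ys z) holomorphic_on - set ys"
  by (auto intro!: holomorphic_intros simp: node_poly_eq_0_iff)

lemma exp_divdiff_eq_sum_residues: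
  "exp_divdiff t ys = (\<Sum>p\<in>set ys. residue (\<lambda>z. exp (complex_of_real t * z) / node_poly ys z) p)"
proof -
  have "set ys \<subseteq> ball 0 (1 + (\<Sum>y\<leftarrow>ys. norm y))"
    using set_subset_cball_sum_list_norm[of ys] by fastforce
  then show ?thesis
    unfolding exp_divdiff_def node_poly_def[symmetric]
    by (subst contour_integral_circlepath_eq_sum_residues) (auto intro: exp_divdiff_integrand_holomorphic)
qed

lemma exp_divdiff_circlepath:
  assumes "set ys \<subseteq> ball 0 R"
  shows "exp_divdiff t ys
    = contour_integral (circlepath 0 R) (\<lambda>z. exp (complex_of_real t * z) / node_poly ys z) / (2 * pi * \<i>)"
  using assms unfolding exp_divdiff_eq_sum_residues
  by (subst contour_integral_circlepath_eq_sum_residues) (auto intro: exp_divdiff_integrand_holomorphic)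

lemma has_contour_integral_exp_divdiff:
  assumes "set ys \<subseteq> ball 0 R"
  shows "((\<lambda>z. exp (complex_of_real t * z) / node_poly ys z) has_contour_integral
           2 * pi * \<i> * exp_divdiff t ys) (circlepath 0 R)"
proof -
  have "z \<notin> set ys" if "norm z = \<bar>R\<bar>" for z
    using assms that by force
  then have "continuous_on (path_image (circlepath 0 R)) (\<lambda>z. exp (complex_of_real t * z) / node_poly ys z)"
    by (intro holomorphic_on_imp_continuous_on holomorphic_intros)
      (auto simp: path_image_circlepath node_poly_eq_0_iff)
  with assms show ?thesis
    by (auto simp: exp_divdiff_circlepath
        intro!: has_contour_integral_integral contour_integrable_continuous_circlepath)
qed

lemma exp_divdiff_Nil [simp]: "exp_divdiff t [] = 0"
  by (simp add: exp_divdiff_eq_sum_residues)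

lemma exp_divdiff_singleton [simp]: "exp_divdiff t [y] = exp (complex_of_real t * y)"
proof -
  have "residue (\<lambda>z. exp (complex_of_real t * z) / (z - y)) y = exp (complex_of_real t * y)"
    by (rule residue_simple[of UNIV]) (auto intro!: holomorphic_intros)
  then show ?thesis
    by (simp add: exp_divdiff_eq_sum_residues)
qed

lemma exp_divdiff_perm:
  assumes "mset xs = mset ys"
  shows "exp_divdiff t xs = exp_divdiff t ys"
proof -
  have "node_poly xs = node_poly ys"
    using node_poly_perm[OF assms] by blast
  with mset_eq_setD[OF assms] show ?thesis
    by (simp add: exp_divdiff_eq_sum_residues)
qed

lemma norm_exp_divdiff_0_le:
  assumes "2 \<le> length ys" "set ys \<subseteq> cball 0 m" "2 * m + 2 \<le> R"
  shows "norm (exp_divdiff 0 ys) \<le> 4 / R"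
proof -
  obtain y :: complex where "norm y \<le> m"
    using assms by (cases ys) auto
  then have "0 \<le> m" "m + 1 \<le> R - m"
    using assms(3) norm_ge_zero[of y] by linarith+
  then have "set ys \<subseteq> ball 0 R"
    using assms(2) by (fastforce simp: subset_iff)
  then have integral: "((\<lambda>z. exp (complex_of_real 0 * z) / node_poly ys z) has_contour_integral
                         2 * pi * \<i> * exp_divdiff 0 ys) (circlepath 0 R)"
    by (rule has_contour_integral_exp_divdiff)
  have "norm (exp (complex_of_real 0 * z) / node_poly ys z) \<le> 1 / (R - m)\<^sup>2" if "norm (z - 0) = R" for z
  proof -
    have "(R - m) ^ length ys \<le> norm (node_poly ys z)"
    proof (rule norm_node_poly_ge)
      fix y assume "y \<in> set ys"
      then have "norm y \<le> m"
        using assms(2) by auto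
      then show "R - m \<le> norm (z - y)"
        using that norm_triangle_ineq2[of z y] by simp
    qed (use \<open>0 \<le> m\<close> \<open>m + 1 \<le> R - m\<close> in simp)
    moreover have "(R - m)\<^sup>2 \<le> (R - m) ^ length ys"
      using assms(1) \<open>0 \<le> m\<close> \<open>m + 1 \<le> R - m\<close> by (intro power_increasing) auto
    ultimately show ?thesis
      using \<open>0 \<le> m\<close> \<open>m + 1 \<le> R - m\<close> by (simp add: norm_divide divide_simps)
  qed
  then have "norm (2 * pi * \<i> * exp_divdiff 0 ys) \<le> 1 / (R - m)\<^sup>2 * (2 * pi * R)"
    using \<open>0 \<le> m\<close> \<open>m + 1 \<le> R - m\<close> by (intro has_contour_integral_bound_circlepath[OF integral]) auto
  then have "2 * pi * norm (exp_divdiff 0 ys) \<le> 2 * pi * (R / (R - m)\<^sup>2)"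
    by (simp add: norm_mult)
  then have "norm (exp_divdiff 0 ys) \<le> R / (R - m)\<^sup>2"
    by (rule mult_left_le_imp_le) simp
  also have "\<dots> \<le> R / (R / 2)\<^sup>2"
    using \<open>0 \<le> m\<close> \<open>m + 1 \<le> R - m\<close> by (intro divide_left_mono power_mono) auto
  also have "\<dots> = 4 / R"
    by (simp add: power2_eq_square)
  finally show ?thesis .
qed

text \<open>Radius independence lets the circle grow: the integrand of a divided difference of order
  at least one with \<open>t = 0\<close> decays like \<open>R\<^sup>-\<^sup>2\<close>.\<close>
lemma exp_divdiff_0: "exp_divdiff 0 ys = (if length ys = 1 then 1 else 0)"
proof -
  consider "ys = []" | y where "ys = [y]" | "2 \<le> length ys"
    by (cases ys rule: remdups_adj.cases) auto
  then show ?thesis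
  proof cases
    case 3
    define m where "m = (\<Sum>y\<leftarrow>ys. norm y)"
    have "set ys \<subseteq> cball 0 m"
      unfolding m_def by (rule set_subset_cball_sum_list_norm)
    then have "eventually (\<lambda>R. norm (exp_divdiff 0 ys) \<le> 4 / R) at_top"
      using 3 by (intro eventually_mono[OF eventually_ge_at_top[of "2 * m + 2"]] norm_exp_divdiff_0_le)
    moreover have "((\<lambda>R. 4 / R :: real) \<longlongrightarrow> 0) at_top"
      by (intro tendsto_divide_0[OF tendsto_const] filterlim_at_top_imp_at_infinity filterlim_ident)
    ultimately have "norm (exp_divdiff 0 ys) \<le> 0"
      by (intro tendsto_lowerbound) auto
    with 3 show ?thesis by simp
  qed simp_all
qed

lemma has_vector_derivative_exp_divdiff_Cons:
  "((\<lambda>t. exp_divdiff t (a # ys)) has_vector_derivative a * exp_divdiff t (a # ys) + exp_divdiff t ys) (at t)"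
proof -
  define R where "R = 1 + (\<Sum>y\<leftarrow>a # ys. norm y)"
  have nodes: "set (a # ys) \<subseteq> ball 0 R"
    using set_subset_cball_sum_list_norm[of "a # ys"] unfolding R_def by fastforce
  then have "0 < R"
    by (auto intro: order_le_less_trans[OF norm_ge_zero])
  have "((\<lambda>z. z * exp (complex_of_real t * z) * (1 / node_poly (a # ys) z)) has_contour_integral
          2 * pi * \<i> * (a * exp_divdiff t (a # ys) + exp_divdiff t ys)) (circlepath 0 R)"
  proof (rule has_contour_integral_eq)
    show "((\<lambda>z. a * (exp (complex_of_real t * z) / node_poly (a # ys) z)
                + exp (complex_of_real t * z) / node_poly ys z) has_contour_integral
          2 * pi * \<i> * (a * exp_divdiff t (a # ys) + exp_divdiff t ys)) (circlepath 0 R)"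
      using has_contour_integral_add[OF has_contour_integral_lmul[OF has_contour_integral_exp_divdiff[OF nodes], of a]
          has_contour_integral_exp_divdiff[OF subset_trans[OF set_subset_Cons nodes]]]
      by (simp add: algebra_simps)
  next
    fix z assume "z \<in> path_image (circlepath 0 R)"
    then have "z \<notin> set (a # ys)"
      using nodes \<open>0 < R\<close> by (auto simp: path_image_circlepath)
    then show "a * (exp (complex_of_real t * z) / node_poly (a # ys) z) + exp (complex_of_real t * z) / node_poly ys z
             = z * exp (complex_of_real t * z) * (1 / node_poly (a # ys) z)"
      by (auto simp: node_poly_eq_0_iff field_simps)
  qed
  moreover have "continuous_on (sphere 0 R) (\<lambda>z. 1 / node_poly (a # ys) z)"
    using nodes by (intro holomorphic_on_imp_continuous_on holomorphic_intros)
      (auto simp: node_poly_eq_0_iff simp del: node_poly_Cons)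
  then have "((\<lambda>u. contour_integral (circlepath 0 R)
                 (\<lambda>z. exp (complex_of_real u * z) * (1 / node_poly (a # ys) z)) / (2 * pi * \<i>))
          has_vector_derivative contour_integral (circlepath 0 R)
                 (\<lambda>z. z * exp (complex_of_real t * z) * (1 / node_poly (a # ys) z)) / (2 * pi * \<i>)) (at t)"
    using \<open>0 < R\<close> by (intro has_vector_derivative_divide has_vector_derivative_circlepath_integral_exp)
  ultimately show ?thesis
    using nodes by (simp add: contour_integral_unique exp_divdiff_circlepath del: node_poly_Cons)
qed

lemma has_vector_derivative_exp_divdiff_Cons_comp:
  assumes "(f has_real_derivative f') (at x within S)"
  shows "((\<lambda>x. exp_divdiff (f x) (a # ys)) has_vector_derivative
           of_real f' * (a * exp_divdiff (f x) (a # ys) + exp_divdiff (f x) ys)) (at x within S)"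
  using vector_diff_chain_within[OF assms[unfolded has_real_derivative_iff_has_vector_derivative]
      has_vector_derivative_at_within[OF has_vector_derivative_exp_divdiff_Cons]]
  by (simp add: o_def scaleR_conv_of_real)

lemma has_vector_derivative_exp_divdiff_snoc_comp:
  assumes "(f has_real_derivative f') (at x within S)"
  shows "((\<lambda>x. exp_divdiff (f x) (ys @ [a])) has_vector_derivative
           of_real f' * (a * exp_divdiff (f x) (ys @ [a]) + exp_divdiff (f x) ys)) (at x within S)"
proof -
  have "exp_divdiff u (ys @ [a]) = exp_divdiff u (a # ys)" for u
    by (rule exp_divdiff_perm) simp
  with has_vector_derivative_exp_divdiff_Cons_comp[OF assms] show ?thesis
    by simp
qed

text \<open>Moving the node \<open>c ! k\<close> from the second factor to the first makes the derivatives telescope.\<close>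
lemma has_vector_derivative_exp_divdiff_split_sum:
  "((\<lambda>u. \<Sum>k<length c. exp_divdiff (p + u) (d @ take (Suc k) c) * exp_divdiff (q - u) (drop k c))
     has_vector_derivative exp_divdiff (p + u) d * exp_divdiff (q - u) c) (at u within S)"
proof -
  define g where "g k = exp_divdiff (p + u) (d @ take k c) * exp_divdiff (q - u) (drop k c)" for k
  have "((\<lambda>u. exp_divdiff (p + u) (d @ take (Suc k) c) * exp_divdiff (q - u) (drop k c))
          has_vector_derivative g k - g (Suc k)) (at u within S)" if "k < length c" for k
  proof -
    have take: "d @ take (Suc k) c = (d @ take k c) @ [c ! k]"
      and drop: "drop k c = c ! k # drop (Suc k) c"
      using that by (simp_all add: take_Suc_conv_app_nth Cons_nth_drop_Suc)
    have "((\<lambda>u. p + u) has_real_derivative 1) (at u within S)"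
      "((\<lambda>u. q - u) has_real_derivative -1) (at u within S)"
      by (auto intro!: derivative_eq_intros)
    from has_vector_derivative_exp_divdiff_snoc_comp[OF this(1), of "d @ take k c" "c ! k"]
      has_vector_derivative_exp_divdiff_Cons_comp[OF this(2), of "c ! k" "drop (Suc k) c"]
    have "((\<lambda>u. exp_divdiff (p + u) (d @ take (Suc k) c)) has_vector_derivative
            c ! k * exp_divdiff (p + u) (d @ take (Suc k) c) + exp_divdiff (p + u) (d @ take k c))
            (at u within S)"
      "((\<lambda>u. exp_divdiff (q - u) (drop k c)) has_vector_derivative
            - (c ! k * exp_divdiff (q - u) (drop k c) + exp_divdiff (q - u) (drop (Suc k) c)))
            (at u within S)"
      unfolding take drop by simp_all
    from has_vector_derivative_mult[OF this] show ?thesis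
      by (rule has_vector_derivative_eq_rhs) (simp add: g_def algebra_simps)
  qed
  then have "((\<lambda>u. \<Sum>k<length c. exp_divdiff (p + u) (d @ take (Suc k) c) * exp_divdiff (q - u) (drop k c))
     has_vector_derivative (\<Sum>k<length c. g k - g (Suc k))) (at u within S)"
    by (intro has_vector_derivative_sum) auto
  also have "(\<Sum>k<length c. g k - g (Suc k)) = g 0 - g (length c)"
    by (rule sum_lessThan_telescope')
  finally show ?thesis
    by (simp add: g_def)
qed

lemma exp_divdiff_add:
  assumes "a \<noteq> []"
  shows "exp_divdiff (s + t) a = (\<Sum>k<length a. exp_divdiff s (take (Suc k) a) * exp_divdiff t (drop k a))"
proof -
  define \<Phi> where "\<Phi> = (\<lambda>u. \<Sum>k<length a. exp_divdiff u (take (Suc k) a) * exp_divdiff (s + t - u) (drop k a))"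
  have "(\<Phi> has_vector_derivative 0) (at u)" for u
    using has_vector_derivative_exp_divdiff_split_sum[where p = 0 and d = "[]" and q = "s + t" and c = a]
    by (simp add: \<Phi>_def)
  then obtain C where "\<And>u. \<Phi> u = C"
    using has_vector_derivative_zero_constant[of UNIV \<Phi>] by auto
  then have "\<Phi> s = \<Phi> 0"
    by simp
  moreover have "\<Phi> 0 = exp_divdiff (s + t) a"
  proof -
    obtain n where n: "length a = Suc n"
      using assms by (cases a) auto
    then have "\<Phi> 0 = exp_divdiff 0 (take 1 a) * exp_divdiff (s + t) a
        + (\<Sum>k<n. exp_divdiff 0 (take (Suc (Suc k)) a) * exp_divdiff (s + t) (drop (Suc k) a))"
      unfolding \<Phi>_def n sum.lessThan_Suc_shift by simp
    also have "(\<Sum>k<n. exp_divdiff 0 (take (Suc (Suc k)) a) * exp_divdiff (s + t) (drop (Suc k) a)) = 0"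
      using n by (intro sum.neutral) (auto simp: exp_divdiff_0)
    finally show ?thesis
      using n by (simp add: exp_divdiff_0)
  qed
  ultimately show ?thesis
    by (simp add: \<Phi>_def)
qed

lemma has_integral_exp_divdiff_product:
  assumes "c \<noteq> []" "d \<noteq> []" "0 \<le> T"
  shows "((\<lambda>\<tau>. exp_divdiff (-\<tau>) c * exp_divdiff (\<tau> - T) d) has_integral - exp_divdiff (-T) (d @ c)) {0..T}"
proof -
  define F where "F \<tau> = (\<Sum>k<length c. exp_divdiff (\<tau> - T) (d @ take (Suc k) c) * exp_divdiff (-\<tau>) (drop k c))" for \<tau>
  have "((\<lambda>\<tau>. exp_divdiff (-\<tau>) c * exp_divdiff (\<tau> - T) d) has_integral F T - F 0) {0..T}"
    using has_vector_derivative_exp_divdiff_split_sum[where p = "-T" and d = d and q = 0 and c = c]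
    by (intro fundamental_theorem_of_calculus \<open>0 \<le> T\<close>) (simp add: F_def mult.commute)
  moreover have "F T = 0"
    using assms(2) by (simp add: F_def exp_divdiff_0)
  moreover have "F 0 = exp_divdiff (-T) (d @ c)"
  proof -
    obtain n where n: "length c = Suc n"
      using assms by (cases c) auto
    then have "F 0 = (\<Sum>k<n. exp_divdiff (-T) (d @ take (Suc k) c) * exp_divdiff 0 (drop k c))
                     + exp_divdiff (-T) (d @ c) * exp_divdiff 0 (drop n c)"
      by (simp add: F_def)
    also have "(\<Sum>k<n. exp_divdiff (-T) (d @ take (Suc k) c) * exp_divdiff 0 (drop k c)) = 0"
      using n by (intro sum.neutral) (auto simp: exp_divdiff_0)
    finally show ?thesis
      using n by (simp add: exp_divdiff_0)
  qed
  ultimately show ?thesis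
    by simp
qed

lemma sum_list_exp_divdiff_snoc: "(\<Sum>y\<leftarrow>b. exp_divdiff t (b @ [y])) = of_real t * exp_divdiff t b"
proof (induction b arbitrary: t)
  case (Cons a b)
  define S where "S u = (\<Sum>y\<leftarrow>a # b. exp_divdiff u (a # b @ [y]))" for u
  define h where "h u = S u - of_real u * exp_divdiff u (a # b)" for u
  have S': "(S has_vector_derivative a * S u + exp_divdiff u (a # b) + of_real u * exp_divdiff u b) (at u)" for u
  proof -
    have "(S has_vector_derivative (\<Sum>y\<leftarrow>a # b. a * exp_divdiff u (a # b @ [y]) + exp_divdiff u (b @ [y])))
            (at u)"
      unfolding S_def by (intro has_vector_derivative_sum_list has_vector_derivative_exp_divdiff_Cons)
    also have "(\<Sum>y\<leftarrow>a # b. a * exp_divdiff u (a # b @ [y]) + exp_divdiff u (b @ [y]))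
               = a * S u + (\<Sum>y\<leftarrow>a # b. exp_divdiff u (b @ [y]))"
      by (simp only: S_def sum_list_addf sum_list_const_mult)
    also have "(\<Sum>y\<leftarrow>a # b. exp_divdiff u (b @ [y])) = exp_divdiff u (a # b) + of_real u * exp_divdiff u b"
      using Cons.IH exp_divdiff_perm[of "b @ [a]" "a # b"] by simp
    finally show ?thesis
      by (simp add: add.assoc)
  qed
  have "(h has_vector_derivative a * h u) (at u)" for u
  proof -
    have "((\<lambda>u. of_real u * exp_divdiff u (a # b)) has_vector_derivative
            of_real u * (a * exp_divdiff u (a # b) + exp_divdiff u b) + of_real 1 * exp_divdiff u (a # b)) (at u)"
      by (intro has_vector_derivative_mult has_vector_derivative_of_real DERIV_ident
          has_vector_derivative_exp_divdiff_Cons)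
    from has_vector_derivative_diff[OF S' this] show ?thesis
      unfolding h_def by (rule has_vector_derivative_eq_rhs) (simp add: h_def algebra_simps)
  qed
  moreover have "h 0 = 0"
    by (simp add: h_def S_def exp_divdiff_0)
  ultimately have "h t = 0"
    by (rule linear_ode_solution_eq_0)
  then show ?case
    by (simp add: h_def S_def)
qed simp

lemma has_integral_weighted_exp_divdiff_product:
  assumes "a \<noteq> []" "0 \<le> \<beta>"
  shows "((\<lambda>\<tau>. of_real \<tau> * exp_divdiff (-\<tau>) b * exp_divdiff (-(\<beta> - \<tau>)) a) has_integral
           (\<Sum>r<length a. exp_divdiff (-(\<beta>/2)) (take (Suc r) a)
              * (\<Sum>y\<leftarrow>b. exp_divdiff (-(\<beta>/2)) (drop r a @ b @ [y])))) {0..\<beta>/2}"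
proof -
  define T where "T = \<beta> / 2"
  have "of_real \<tau> * exp_divdiff (-\<tau>) b * exp_divdiff (-(\<beta> - \<tau>)) a
        = (\<Sum>r<length a. - exp_divdiff (-T) (take (Suc r) a)
             * (\<Sum>y\<leftarrow>b. exp_divdiff (-\<tau>) (b @ [y]) * exp_divdiff (\<tau> - T) (drop r a)))" for \<tau>
  proof -
    have "of_real \<tau> * exp_divdiff (-\<tau>) b = - (\<Sum>y\<leftarrow>b. exp_divdiff (-\<tau>) (b @ [y]))"
      using sum_list_exp_divdiff_snoc[of "-\<tau>" b] by simp
    moreover have "exp_divdiff (-(\<beta> - \<tau>)) a = exp_divdiff (-T + (\<tau> - T)) a"
      by (simp add: T_def)
    moreover have "\<dots> = (\<Sum>r<length a. exp_divdiff (-T) (take (Suc r) a) * exp_divdiff (\<tau> - T) (drop r a))"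
      using assms(1) by (rule exp_divdiff_add)
    ultimately show ?thesis
      by (simp add: sum_distrib_left sum_list_const_mult mult_ac)
  qed
  moreover have "((\<lambda>\<tau>. \<Sum>r<length a. - exp_divdiff (-T) (take (Suc r) a)
             * (\<Sum>y\<leftarrow>b. exp_divdiff (-\<tau>) (b @ [y]) * exp_divdiff (\<tau> - T) (drop r a))) has_integral
           (\<Sum>r<length a. - exp_divdiff (-T) (take (Suc r) a)
              * (\<Sum>y\<leftarrow>b. - exp_divdiff (-T) (drop r a @ b @ [y])))) {0..T}"
    using assms
    by (intro has_integral_sum finite_lessThan has_integral_mult_right has_integral_sum_list
        has_integral_exp_divdiff_product[THEN has_integral_eq_rhs]) (auto simp: T_def)
  ultimately show ?thesis
    by (simp add: T_def uminus_sum_list_map[symmetric, unfolded o_def])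
qed

theorem lemma3:
  fixes x :: "nat \<Rightarrow> complex" and q j :: nat and \<beta> :: real
  assumes "q \<ge> 1" and "j \<le> q - 1" and "\<beta> > 0"
  shows "integral {0..\<beta>/2}
           (\<lambda>\<tau>. complex_of_real \<tau> * exp_divdiff (-\<tau>) (map x [j+1..<q+1])
                   * exp_divdiff (-(\<beta> - \<tau>)) (map x [0..<j+1]))
         = (\<Sum>r=0..j. exp_divdiff (-(\<beta>/2)) (map x [0..<r+1])
              * (\<Sum>m=j+1..q. exp_divdiff (-(\<beta>/2)) (map x [r..<q+1] @ [x m])))"
proof -
  define a where "a = map x [0..<j+1]"
  define b where "b = map x [j+1..<q+1]"
  have take: "take (Suc r) a = map x [0..<r+1]" and drop: "drop r a @ b = map x [r..<q+1]" if "r \<le> j" for r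
    using that assms(1,2) upt_add_eq_append[of r "j+1" "q-j"]
    by (simp_all add: a_def b_def take_map drop_map flip: map_append del: upt_Suc)
  have sum_b: "(\<Sum>y\<leftarrow>b. f y) = (\<Sum>m=j+1..q. f (x m))" for f :: "complex \<Rightarrow> complex"
    by (simp add: b_def interv_sum_list_conv_sum_set_nat atLeastLessThanSuc_atLeastAtMost del: upt_Suc)
  have "a \<noteq> []" "{..<length a} = {0..j}"
    by (auto simp: a_def simp del: upt_Suc)
  then have "integral {0..\<beta>/2} (\<lambda>\<tau>. of_real \<tau> * exp_divdiff (-\<tau>) b * exp_divdiff (-(\<beta> - \<tau>)) a)
      = (\<Sum>r=0..j. exp_divdiff (-(\<beta>/2)) (take (Suc r) a)
           * (\<Sum>y\<leftarrow>b. exp_divdiff (-(\<beta>/2)) ((drop r a @ b) @ [y])))"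
    using integral_unique[OF has_integral_weighted_exp_divdiff_product[of a \<beta> b]] assms(3) by simp
  also have "\<dots> = (\<Sum>r=0..j. exp_divdiff (-(\<beta>/2)) (map x [0..<r+1])
              * (\<Sum>m=j+1..q. exp_divdiff (-(\<beta>/2)) (map x [r..<q+1] @ [x m])))"
    using take drop sum_b by (intro sum.cong) (simp_all del: upt_Suc)
  finally show ?thesis
    unfolding a_def b_def .
qed

end
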